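(* Let $\mathsf{X} = \langle \mathsf{E}, \mathsf{po}, \mathsf{rf}, \mathsf{mo}\rangle$ be a 1-Writer execution graph. Then for $\mathcal{M} \in \{\mathsf{SRA}, \mathsf{RA}\}$, $\mathsf{X}$ is consistent with $\mathcal{M}$ if and only if $\mathsf{mo}$ agrees with $\mathsf{po}$ and $\mathsf{X}$ is consistent with $\mathsf{WRA}$.
   Context: An event is either a read $\mathtt{r}(x,v)$ or a write $\mathtt{w}(x,v)$ of a value $v$ to/from a shared variable $x$; every event belongs to a thread. An execution graph $\mathsf{X}=\langle \mathsf{E},\mathsf{po},\mathsf{rf},\mathsf{mo}\rangle$ consists of a finite set of events $\mathsf{E}$; the program order $\mathsf{po}$, a strict partial order that totally orders the events of each thread (and relates no events of distinct threads); a reads-from relation $\mathsf{rf}$ relating writes to reads, such that every read $r$ is related to exactly one write $\mathsf{rf}^{-1}(r)$ with the same variable and value; and a modification order $\mathsf{mo}=\bigcup_x \mathsf{mo}_x$, where $\mathsf{mo}_x$ is a strict total order on the writes to $x$. $\mathsf{X}$ is 1-Writer if for every variable $x$ at most one thread contains writes to $x$. $\mathsf{mo}$ agrees with $\mathsf{po}$ if $w\,\mathsf{mo}\,w'$ implies $w\,\mathsf{po}\,w'$. The happens-before relation is $\mathsf{hb}=(\mathsf{po}\cup\mathsf{rf})^+$. Axioms: porf-acyclicity: $\mathsf{po}\cup\mathsf{rf}$ is acyclic. Write-coherence: no writes $w,w'$ to the same $x$ with $w\,\mathsf{mo}_x\,w'$ and $w'\,\mathsf{hb}\,w$. Strong-write-coherence: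 $\mathsf{hb}\cup\mathsf{mo}$ is acyclic. Read-coherence: no read $r$ of $x$ and writes $w,w'$ of $x$ with $w\,\mathsf{rf}\,r$, $w\,\mathsf{mo}_x\,w'$, $w'\,\mathsf{hb}\,r$. Weak-read-coherence: no read $r$ of $x$ and writes $w,w'$ of $x$ with $w\,\mathsf{rf}\,r$, $w\,\mathsf{hb}\,w'$, $w'\,\mathsf{hb}\,r$. Consistency with $\mathsf{WRA}$: porf-acyclicity and weak-read-coherence; with $\mathsf{RA}$: porf-acyclicity, write-coherence and read-coherence; with $\mathsf{SRA}$: porf-acyclicity, strong-write-coherence and read-coherence. *)

theory Defs
  imports Main
begin

datatype ('x, 'v) label = Rd 'x 'v | Wr 'x 'v

fun loc :: "('x, 'v) label \<Rightarrow> 'x" where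
  "loc (Rd x v) = x" | "loc (Wr x v) = x"

fun val :: "('x, 'v) label \<Rightarrow> 'v" where
  "val (Rd x v) = v" | "val (Wr x v) = v"

fun is_rd :: "('x, 'v) label \<Rightarrow> bool" where
  "is_rd (Rd x v) = True" | "is_rd (Wr x v) = False"

fun is_wr :: "('x, 'v) label \<Rightarrow> bool" where
  "is_wr (Rd x v) = False" | "is_wr (Wr x v) = True"

record ('e, 'x, 'v, 't) exec =
  E   :: "'e set"
  lab :: "'e \<Rightarrow> ('x, 'v) label"
  tid :: "'e \<Rightarrow> 't"
  po  :: "('e \<times> 'e) set"
  rf  :: "('e \<times> 'e) set"
  mo  :: "('e \<times> 'e) set"

definition reads :: "('e, 'x, 'v, 't) exec \<Rightarrow> 'e set" where
  "reads X = {e \<in> E X. is_rd (lab X e)}"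

definition writes :: "('e, 'x, 'v, 't) exec \<Rightarrow> 'e set" where
  "writes X = {e \<in> E X. is_wr (lab X e)}"

definition writes_to :: "('e, 'x, 'v, 't) exec \<Rightarrow> 'x \<Rightarrow> 'e set" where
  "writes_to X x = {e \<in> writes X. loc (lab X e) = x}"

definition wf_exec :: "('e, 'x, 'v, 't) exec \<Rightarrow> bool" where
  "wf_exec X \<longleftrightarrow>
     finite (E X)
     \<comment> \<open>po: strict partial order on E, total on each thread, relating only same-thread events\<close>
     \<and> po X \<subseteq> E X \<times> E X
     \<and> irrefl (po X) \<and> trans (po X)
     \<and> (\<forall>a b. (a, b) \<in> po X \<longrightarrow> tid X a = tid X b)
     \<and> (\<forall>a\<in>E X. \<forall>b\<in>E X. tid X a = tid X b \<longrightarrow> a \<noteq> b \<longrightarrow> (a, b) \<in> po X \<or> (b, a) \<in> po X)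
     \<comment> \<open>rf: from writes to reads, each read reads from exactly one write of same location and value\<close>
     \<and> rf X \<subseteq> writes X \<times> reads X
     \<and> (\<forall>r\<in>reads X. \<exists>!w. (w, r) \<in> rf X)
     \<and> (\<forall>w r. (w, r) \<in> rf X \<longrightarrow> loc (lab X w) = loc (lab X r) \<and> val (lab X w) = val (lab X r))
     \<comment> \<open>mo: union over x of strict total orders on the writes to x\<close>
     \<and> mo X \<subseteq> writes X \<times> writes X
     \<and> (\<forall>w w'. (w, w') \<in> mo X \<longrightarrow> loc (lab X w) = loc (lab X w'))
     \<and> irrefl (mo X) \<and> trans (mo X)
     \<and> (\<forall>w\<in>writes X. \<forall>w'\<in>writes X. loc (lab X w) = loc (lab X w') \<longrightarrow> w \<noteq> w'
            \<longrightarrow> (w, w') \<in> mo X \<or> (w', w) \<in> mo X)"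

definition one_writer :: "('e, 'x, 'v, 't) exec \<Rightarrow> bool" where
  "one_writer X \<longleftrightarrow>
     (\<forall>x. \<forall>w\<in>writes_to X x. \<forall>w'\<in>writes_to X x. tid X w = tid X w')"

definition mo_agrees_po :: "('e, 'x, 'v, 't) exec \<Rightarrow> bool" where
  "mo_agrees_po X \<longleftrightarrow> mo X \<subseteq> po X"

definition hb :: "('e, 'x, 'v, 't) exec \<Rightarrow> ('e \<times> 'e) set" where
  "hb X = (po X \<union> rf X)\<^sup>+"

definition porf_acyclic :: "('e, 'x, 'v, 't) exec \<Rightarrow> bool" where
  "porf_acyclic X \<longleftrightarrow> acyclic (po X \<union> rf X)"

definition write_coherent :: "('e, 'x, 'v, 't) exec \<Rightarrow> bool" where
  "write_coherent X \<longleftrightarrow>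
     \<not> (\<exists>w w'. (w, w') \<in> mo X \<and> (w', w) \<in> hb X)"

definition strong_write_coherent :: "('e, 'x, 'v, 't) exec \<Rightarrow> bool" where
  "strong_write_coherent X \<longleftrightarrow> acyclic (hb X \<union> mo X)"

definition read_coherent :: "('e, 'x, 'v, 't) exec \<Rightarrow> bool" where
  "read_coherent X \<longleftrightarrow>
     \<not> (\<exists>r w w'. r \<in> reads X \<and> w \<in> writes X \<and> w' \<in> writes X
          \<and> loc (lab X w) = loc (lab X r) \<and> loc (lab X w') = loc (lab X r)
          \<and> (w, r) \<in> rf X \<and> (w, w') \<in> mo X \<and> (w', r) \<in> hb X)"

definition weak_read_coherent :: "('e, 'x, 'v, 't) exec \<Rightarrow> bool" where
  "weak_read_coherent X \<longleftrightarrow>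
     \<not> (\<exists>r w w'. r \<in> reads X \<and> w \<in> writes X \<and> w' \<in> writes X
          \<and> loc (lab X w) = loc (lab X r) \<and> loc (lab X w') = loc (lab X r)
          \<and> (w, r) \<in> rf X \<and> (w, w') \<in> hb X \<and> (w', r) \<in> hb X)"

datatype model = WRA | RA | SRA

fun consistent :: "model \<Rightarrow> ('e, 'x, 'v, 't) exec \<Rightarrow> bool" where
  "consistent WRA X \<longleftrightarrow> porf_acyclic X \<and> weak_read_coherent X"
| "consistent RA X \<longleftrightarrow> porf_acyclic X \<and> write_coherent X \<and> read_coherent X"
| "consistent SRA X \<longleftrightarrow> porf_acyclic X \<and> strong_write_coherent X \<and> read_coherent X"

end

theory Submission
  imports Defs
begin

text \<open>Under one writer per location, any two writes to the same location are
po-ordered, so write-coherence (po \<subseteq> hb) forces mo to follow po; and of two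
distinct writes w, w' hb-before a read of w, the mo-order between them is
excluded in one direction by read-coherence and in the other by write-coherence,
which gives weak read-coherence. Conversely, if mo \<subseteq> po then mo \<subseteq> hb: hence
hb \<union> mo = hb is acyclic, and every read-coherence violation is a weak
read-coherence violation.\<close>

lemma po_subset_hb: "po X \<subseteq> hb X"
  unfolding hb_def by auto

lemma trans_hb: "trans (hb X)"
  unfolding hb_def by simp

lemma porf_acyclic_iff_irrefl_hb: "porf_acyclic X \<longleftrightarrow> irrefl (hb X)"
  unfolding porf_acyclic_def acyclic_def irrefl_def hb_def by simp

lemma mo_subset_hb_if_mo_agrees_po: "mo_agrees_po X \<Longrightarrow> mo X \<subseteq> hb X"
  using po_subset_hb unfolding mo_agrees_po_def by blast

lemma strong_write_coherent_imp_write_coherent: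
  "strong_write_coherent X \<Longrightarrow> write_coherent X"
  unfolding strong_write_coherent_def write_coherent_def acyclic_def
  by (meson UnI1 UnI2 trancl.r_into_trancl trancl_trans)

lemma consistent_SRA_imp_RA: "consistent SRA X \<Longrightarrow> consistent RA X"
  by (simp add: strong_write_coherent_imp_write_coherent)

lemma mo_agrees_po_if_one_writer:
  assumes wf: "wf_exec X" and ow: "one_writer X" and wc: "write_coherent X"
  shows "mo_agrees_po X"
  unfolding mo_agrees_po_def
proof safe
  fix w w' assume mo: "(w, w') \<in> mo X"
  have writes: "w \<in> writes X" "w' \<in> writes X" "loc (lab X w) = loc (lab X w')"
    using mo wf unfolding wf_exec_def by blast+
  have "w \<noteq> w'"
    using mo wf unfolding wf_exec_def irrefl_def by blast
  moreover have "tid X w = tid X w'"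
    using ow writes unfolding one_writer_def writes_to_def by blast
  moreover have "w \<in> E X" "w' \<in> E X"
    using writes unfolding writes_def by auto
  ultimately have "(w, w') \<in> po X \<or> (w', w) \<in> po X"
    using wf unfolding wf_exec_def by blast
  moreover have "(w', w) \<notin> po X"
    using wc mo po_subset_hb unfolding write_coherent_def by blast
  ultimately show "(w, w') \<in> po X" by blast
qed

lemma consistent_RA_imp_WRA:
  assumes wf: "wf_exec X" and ra: "consistent RA X"
  shows "consistent WRA X"
proof -
  have pa: "porf_acyclic X" and wc: "write_coherent X" and rc: "read_coherent X"
    using ra by simp_all
  have "False" if "r \<in> reads X" "w \<in> writes X" "w' \<in> writes X"
    "loc (lab X w) = loc (lab X r)" "loc (lab X w') = loc (lab X r)"
    "(w, r) \<in> rf X" "(w, w') \<in> hb X" "(w', r) \<in> hb X" for r w w'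
  proof -
    have "w \<noteq> w'"
      using \<open>(w, w') \<in> hb X\<close> pa unfolding porf_acyclic_iff_irrefl_hb irrefl_def by blast
    then have "(w, w') \<in> mo X \<or> (w', w) \<in> mo X"
      using wf that unfolding wf_exec_def by metis
    then show False
      using rc wc that unfolding read_coherent_def write_coherent_def by blast
  qed
  then show ?thesis
    using pa unfolding consistent.simps weak_read_coherent_def by blast
qed

lemma consistent_SRA_if_mo_agrees_po:
  assumes mp: "mo_agrees_po X" and wra: "consistent WRA X"
  shows "consistent SRA X"
proof -
  have mo_hb: "mo X \<subseteq> hb X"
    using mp by (rule mo_subset_hb_if_mo_agrees_po)
  have pa: "porf_acyclic X"
    using wra by simp
  have "acyclic (hb X \<union> mo X)"
    using pa mo_hb trans_hb[of X]
    unfolding porf_acyclic_iff_irrefl_hb acyclic_irrefl Un_absorb2[OF mo_hb]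
    by (simp add: trancl_id)
  moreover have "read_coherent X"
    using wra mo_hb unfolding consistent.simps read_coherent_def weak_read_coherent_def
    by blast
  ultimately show ?thesis
    using pa by (simp add: strong_write_coherent_def)
qed

theorem lemma2:
  fixes X :: "('e, 'x, 'v, 't) exec" and M :: model
  assumes "wf_exec X"
    and "one_writer X"
    and "M \<in> {SRA, RA}"
  shows "consistent M X \<longleftrightarrow> mo_agrees_po X \<and> consistent WRA X"
proof -
  have RA_iff: "consistent RA X \<longleftrightarrow> mo_agrees_po X \<and> consistent WRA X"
    using consistent_RA_imp_WRA[OF assms(1)] mo_agrees_po_if_one_writer[OF assms(1,2)]
      consistent_SRA_if_mo_agrees_po consistent_SRA_imp_RA
    by fastforce
  moreover have "consistent SRA X \<longleftrightarrow> consistent RA X"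
    using RA_iff consistent_SRA_imp_RA consistent_SRA_if_mo_agrees_po by blast
  ultimately show ?thesis
    using assms(3) by auto
qed

end
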